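(* Fix a positive integer $l$ and $\rho\in\mathcal C$. For every $n\ge1$ let $\pi_n$ be a random permutation in $S_n$ with law $\mathbb P_n$, such that \[ \lim_{n\to\infty}\sup_{\mathbf p,\mathbf q\in\mathcal S(n,l)}\left|\frac{n^l\,\mathbb P_n(\pi_n(\mathbf p)=\mathbf q)}{\prod_{a=1}^l\rho\left(\frac{p_a}{n},\frac{q_a}{n}\right)}-1\right|=0. \] Suppose $\mathbf p_n\in\mathcal S(n,l)$ satisfies $\frac1n\mathbf p_n\to\mathbf x=(x_1,\dots,x_l)\in[0,1]^l$. Then $\frac1n\pi_n(\mathbf p_n)$ converges in distribution to $(Y(x_1),\dots,Y(x_l))$, where $Y(x_1),\dots,Y(x_l)$ are mutually independent and $Y(x_a)$ has density $\rho(x_a,\cdot)$ on $[0,1]$.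
   Context: $[n]=\{1,\dots,n\}$. $\mathcal S(n,l)=\{\mathbf p=(p_1,\dots,p_l)\in[n]^l: p_a\ne p_b \text{ for } a\ne b\}$; for a permutation $\pi_n$, $\pi_n(\mathbf p)=(\pi_n(p_1),\dots,\pi_n(p_l))$. $\mathcal C$ is the set of strictly positive continuous functions $\rho$ on $[0,1]^2$ with $\int_0^1\rho(x,y)\,dx=\int_0^1\rho(x,y)\,dy=1$ for all $x,y$. *)

theory Defs
  imports "HOL-Probability.Probability" "HOL-Combinatorics.Permutations"
begin

definition class_C :: "(real \<Rightarrow> real \<Rightarrow> real) \<Rightarrow> bool" where
  "class_C \<rho> \<longleftrightarrow>
     continuous_on ({0..1} \<times> {0..1}) (\<lambda>(x, y). \<rho> x y) \<and>
     (\<forall>x\<in>{0..1}. \<forall>y\<in>{0..1}. \<rho> x y > 0) \<and>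
     (\<forall>y\<in>{0..1}. integral {0..1} (\<lambda>x. \<rho> x y) = 1) \<and>
     (\<forall>x\<in>{0..1}. integral {0..1} (\<lambda>y. \<rho> x y) = 1)"

text \<open>S(n,l): injective l-tuples with entries in [n]; the index set [l] is the
  finite type 'l.\<close>
definition tuples_S :: "nat \<Rightarrow> ('l::finite \<Rightarrow> nat) set" where
  "tuples_S n = {p. inj p \<and> range p \<subseteq> {1..n}}"

definition conv_in_distr :: "(nat \<Rightarrow> (real^'l::finite) measure) \<Rightarrow> (real^'l) measure \<Rightarrow> bool" where
  "conv_in_distr M L \<longleftrightarrow>
     (\<forall>f :: real^'l \<Rightarrow> real. continuous_on UNIV f \<and> bounded (range f) \<longrightarrow>
        (\<lambda>n. integral\<^sup>L (M n) f) \<longlonglongrightarrow> integral\<^sup>L L f)"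

text \<open>Law of (Y(x_1),...,Y(x_l)) with independent coordinates, Y(x_a) having
  density rho(x_a, .) on [0,1]: product density on real^'l.\<close>
definition limit_law :: "(real \<Rightarrow> real \<Rightarrow> real) \<Rightarrow> real^'l::finite \<Rightarrow> (real^'l) measure" where
  "limit_law \<rho> x = density lborel
     (\<lambda>y. ennreal (\<Prod>a\<in>UNIV. indicator {0..1} (y $ a) * \<rho> (x $ a) (y $ a)))"

end

theory Submission
  imports Defs
begin

text \<open>Cut the unit cube into the \<open>n\<^sup>l\<close> cells \<open>\<Prod>\<^sub>a ((q\<^sub>a - 1)/n, q\<^sub>a/n]\<close>. The expectation of
  \<open>f(\<pi>\<^sub>n(p\<^sub>n)/n)\<close> is the Lebesgue integral of the step function whose value on the cell of \<open>q\<close> is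
  \<open>n\<^sup>l \<bbbP>(\<pi>\<^sub>n(p\<^sub>n) = q) f(q/n)\<close>. By the uniform local limit hypothesis these values are bounded and,
  at almost every point \<open>y\<close> (those off the diagonals, whose cell index is an injective tuple for
  large \<open>n\<close>), they converge to \<open>\<Prod>\<^sub>a \<rho>(x\<^sub>a, y\<^sub>a) f(y)\<close> by continuity of \<open>\<rho>\<close>. Dominated convergence
  then gives the convergence of expectations to the integral against the limiting density.\<close>

definition grid_points :: "nat \<Rightarrow> ('l::finite \<Rightarrow> nat) set" where
  "grid_points n = {q. \<forall>a. q a \<in> {1..n}}"

definition grid_point :: "nat \<Rightarrow> ('l::finite \<Rightarrow> nat) \<Rightarrow> real^'l" where
  "grid_point n q = (\<chi> a. real (q a) / real n)"

text \<open>\<open>nat \<lceil>n y\<^sub>a\<rceil>\<close> is the \<open>q\<^sub>a\<close> with \<open>(q\<^sub>a - 1)/n < y\<^sub>a \<le> q\<^sub>a/n\<close>, so for \<open>y\<close> in the open unit cube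
  and \<open>n \<ge> 1\<close> this is the index of the grid cell containing \<open>y\<close>.\<close>

definition grid_index :: "nat \<Rightarrow> real^'l::finite \<Rightarrow> 'l \<Rightarrow> nat" where
  "grid_index n y = (\<lambda>a. nat \<lceil>real n * y $ a\<rceil>)"

definition grid_cell :: "nat \<Rightarrow> ('l::finite \<Rightarrow> nat) \<Rightarrow> (real^'l) set" where
  "grid_cell n q = {y. \<forall>a. (real (q a) - 1) / real n < y $ a \<and> y $ a \<le> real (q a) / real n}"

definition step_fun :: "nat \<Rightarrow> (('l::finite \<Rightarrow> nat) \<Rightarrow> real) \<Rightarrow> real^'l \<Rightarrow> real" where
  "step_fun n G y = (\<Sum>q\<in>grid_points n. G q * indicator (grid_cell n q) y)"

lemma finite_grid_points: "finite (grid_points n :: ('l::finite \<Rightarrow> nat) set)"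
proof -
  have "grid_points n = (UNIV \<rightarrow>\<^sub>E {1..n} :: ('l \<Rightarrow> nat) set)"
    by (auto simp: grid_points_def PiE_UNIV_domain)
  then show ?thesis by (simp add: finite_PiE)
qed

lemma grid_cell_sets [measurable]: "grid_cell n q \<in> sets borel"
  unfolding grid_cell_def by measurable

lemma grid_cell_subset_unit_box:
  assumes "q \<in> grid_points n"
  shows "grid_cell n q \<subseteq> cbox 0 1"
proof
  fix y assume y: "y \<in> grid_cell n q"
  show "y \<in> cbox 0 1"
    unfolding mem_box_cart
  proof
    fix a
    have "1 \<le> q a" "q a \<le> n" using assms by (auto simp: grid_points_def)
    then have "0 \<le> (real (q a) - 1) / real n" "real (q a) / real n \<le> 1"
      by (auto simp: divide_le_eq_1)
    moreover from y have "(real (q a) - 1) / real n < y $ a" "y $ a \<le> real (q a) / real n"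
      by (auto simp: grid_cell_def)
    ultimately show "0 $ a \<le> y $ a \<and> y $ a \<le> 1 $ a"
      by simp
  qed
qed

lemma measure_grid_cell:
  fixes q :: "'l::finite \<Rightarrow> nat"
  assumes "n \<ge> 1"
  shows "measure lborel (grid_cell n q) = 1 / real n ^ CARD('l)"
proof -
  define u :: "real^'l" where "u = (\<chi> a. (real (q a) - 1) / real n)"
  define v :: "real^'l" where "v = (\<chi> a. real (q a) / real n)"
  have uv: "u $ a \<le> v $ a" for a
    using assms by (simp add: u_def v_def divide_right_mono)
  have "box u v \<subseteq> grid_cell n q" "grid_cell n q \<subseteq> cbox u v"
    by (auto simp: grid_cell_def mem_box_cart u_def v_def less_imp_le)
  then have "emeasure lborel (box u v) \<le> emeasure lborel (grid_cell n q)"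
      "emeasure lborel (grid_cell n q) \<le> emeasure lborel (cbox u v)"
    by (auto intro!: emeasure_mono)
  moreover have "emeasure lborel (box u v) = emeasure lborel (cbox u v)"
    by (simp add: emeasure_lborel_box_eq emeasure_lborel_cbox_eq)
  ultimately have "measure lborel (grid_cell n q) = measure lborel (cbox u v)"
    by (simp add: measure_def)
  also have "\<dots> = (\<Prod>a\<in>UNIV. v $ a - u $ a)"
    using uv by (intro content_cbox_cart) (metis empty_iff mem_box_cart(2) order_refl)
  also have "\<dots> = 1 / real n ^ CARD('l)"
    by (simp add: u_def v_def diff_divide_distrib power_one_over)
  finally show ?thesis .
qed

lemma grid_index_unique:
  assumes "n \<ge> 1" "y \<in> grid_cell n q"
  shows "grid_index n y = q"
proof
  fix a
  from assms have "real (q a) - 1 < real n * y $ a" "real n * y $ a \<le> real (q a)"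
    by (auto simp: grid_cell_def field_simps)
  then have "\<lceil>real n * y $ a\<rceil> = int (q a)"
    by (intro ceiling_unique) auto
  then show "grid_index n y a = q a"
    by (simp add: grid_index_def)
qed

lemma grid_index_bounds:
  assumes "0 \<le> y $ a"
  shows "real n * y $ a \<le> real (grid_index n y a)" "real (grid_index n y a) < real n * y $ a + 1"
proof -
  have "real (grid_index n y a) = of_int \<lceil>real n * y $ a\<rceil>"
    using assms by (simp add: grid_index_def)
  then show "real n * y $ a \<le> real (grid_index n y a)" "real (grid_index n y a) < real n * y $ a + 1"
    by linarith+
qed

lemma mem_grid_cell_grid_index:
  assumes "n \<ge> 1" "y \<in> box 0 1"
  shows "y \<in> grid_cell n (grid_index n y)" "grid_index n y \<in> grid_points n"
proof -
  have y: "0 < y $ a" "y $ a < 1" for a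
    using assms(2) by (auto simp: mem_box_cart)
  show "y \<in> grid_cell n (grid_index n y)"
    using grid_index_bounds[of y _ n] y assms(1) by (auto simp: grid_cell_def field_simps less_imp_le)
  have ceiling_bounds: "1 \<le> \<lceil>real n * y $ a\<rceil> \<and> \<lceil>real n * y $ a\<rceil> \<le> int n" for a
    using y[of a] assms(1) by (auto simp: ceiling_le_iff mult_le_cancel_left1 less_imp_le)
  have "grid_index n y a \<in> {1..n}" for a
    using ceiling_bounds[of a] unfolding grid_index_def atLeastAtMost_iff by linarith
  then show "grid_index n y \<in> grid_points n"
    by (simp add: grid_points_def)
qed

lemma step_fun_grid_cell:
  assumes "n \<ge> 1" "q \<in> grid_points n" "y \<in> grid_cell n q"
  shows "step_fun n G y = G q"
proof -
  have "G q' * indicator (grid_cell n q') y = (if q' = q then G q else 0)" for q'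
  proof (cases "y \<in> grid_cell n q'")
    case True
    then have "q' = q"
      using grid_index_unique[OF assms(1)] assms(3) by metis
    with True show ?thesis by simp
  qed (use assms(3) in auto)
  then have "step_fun n G y = (\<Sum>q'\<in>grid_points n. if q' = q then G q else 0)"
    unfolding step_fun_def by simp
  then show ?thesis
    using assms(2) by (simp add: finite_grid_points)
qed

lemma step_fun_outside_grid_cells:
  assumes "\<forall>q\<in>grid_points n. y \<notin> grid_cell n q"
  shows "step_fun n G y = 0"
  using assms by (simp add: step_fun_def)

lemma step_fun_in_box:
  assumes "n \<ge> 1" "y \<in> box 0 1"
  shows "step_fun n G y = G (grid_index n y)"
  using step_fun_grid_cell mem_grid_cell_grid_index assms by blast

lemma step_fun_outside_cbox:
  assumes "y \<notin> cbox 0 1"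
  shows "step_fun n G y = 0"
  using assms grid_cell_subset_unit_box by (intro step_fun_outside_grid_cells) blast

lemma abs_step_fun_le:
  fixes G :: "('l::finite \<Rightarrow> nat) \<Rightarrow> real"
  assumes "n \<ge> 1" "\<And>q. q \<in> grid_points n \<Longrightarrow> \<bar>G q\<bar> \<le> K"
  shows "\<bar>step_fun n G y\<bar> \<le> K * indicator (cbox 0 1) y"
proof -
  have "(\<lambda>_. 1) \<in> (grid_points n :: ('l \<Rightarrow> nat) set)"
    using assms(1) by (simp add: grid_points_def)
  then have "0 \<le> K"
    by (rule order_trans[OF abs_ge_zero assms(2)])
  show ?thesis
  proof (cases "\<exists>q\<in>grid_points n. y \<in> grid_cell n q")
    case True
    then obtain q where q: "q \<in> grid_points n" "y \<in> grid_cell n q" by blast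
    then have "y \<in> cbox 0 1"
      using grid_cell_subset_unit_box by blast
    then show ?thesis
      using step_fun_grid_cell[OF assms(1) q] assms(2)[OF q(1)] by simp
  next
    case False
    then have "step_fun n G y = 0"
      by (intro step_fun_outside_grid_cells) blast
    then show ?thesis
      using \<open>0 \<le> K\<close> by simp
  qed
qed

lemma borel_measurable_step_fun [measurable]: "step_fun n G \<in> borel_measurable lborel"
  unfolding step_fun_def[abs_def] by measurable

lemma integral_step_fun:
  fixes G :: "('l::finite \<Rightarrow> nat) \<Rightarrow> real"
  assumes "n \<ge> 1"
  shows "integral\<^sup>L lborel (step_fun n G) = (\<Sum>q\<in>grid_points n. G q) / real n ^ CARD('l)"
proof -
  have finite_cell: "emeasure lborel (grid_cell n q) < \<infinity>" if "q \<in> grid_points n" for q :: "'l \<Rightarrow> nat"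
  proof -
    have "emeasure lborel (grid_cell n q) \<le> emeasure lborel (cbox (0::real^'l) 1)"
      by (rule emeasure_mono[OF grid_cell_subset_unit_box[OF that]]) simp
    then show ?thesis
      using emeasure_lborel_cbox_finite by (rule le_less_trans)
  qed
  have "integral\<^sup>L lborel (step_fun n G)
      = (\<Sum>q\<in>grid_points n. integral\<^sup>L lborel (\<lambda>y. G q * indicator (grid_cell n q) y))"
    unfolding step_fun_def[abs_def]
    by (intro Bochner_Integration.integral_sum integrable_mult_right integrable_real_indicator
        finite_cell) auto
  also have "\<dots> = (\<Sum>q\<in>grid_points n. G q / real n ^ CARD('l))"
    by (simp add: measure_grid_cell[OF assms])
  finally show ?thesis
    by (simp add: sum_divide_distrib)
qed

lemma expectation_grid_point_eq_integral_step_fun: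
  fixes Q :: "('l::finite \<Rightarrow> nat) pmf"
  assumes "n \<ge> 1" "set_pmf Q \<subseteq> grid_points n"
  shows "measure_pmf.expectation Q (\<lambda>q. f (grid_point n q))
    = integral\<^sup>L lborel (step_fun n (\<lambda>q. real n ^ CARD('l) * pmf Q q * f (grid_point n q)))"
  using assms by (subst integral_measure_pmf_real[OF finite_grid_points])
    (auto simp: integral_step_fun sum_divide_distrib mult_ac)

lemma tendsto_grid_point_grid_index:
  assumes "\<forall>a. 0 \<le> y $ a"
  shows "(\<lambda>n. grid_point n (grid_index n y)) \<longlonglongrightarrow> y"
proof (rule vec_tendstoI)
  fix a
  have "(\<lambda>n. real (grid_index n y a) / real n) \<longlonglongrightarrow> y $ a"
  proof (rule tendsto_sandwich)
    have "\<forall>\<^sub>F n in sequentially. y $ a \<le> real (grid_index n y a) / real n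
        \<and> real (grid_index n y a) / real n \<le> y $ a + 1 / real n"
      using eventually_ge_at_top[of "1::nat"]
    proof eventually_elim
      case (elim n)
      then show ?case
        using grid_index_bounds[of y a n] assms by (simp add: field_simps)
    qed
    then show "\<forall>\<^sub>F n in sequentially. y $ a \<le> real (grid_index n y a) / real n"
        "\<forall>\<^sub>F n in sequentially. real (grid_index n y a) / real n \<le> y $ a + 1 / real n"
      by (simp_all add: eventually_conj_iff)
    show "(\<lambda>n. y $ a + 1 / real n) \<longlonglongrightarrow> y $ a"
      using tendsto_add[OF tendsto_const lim_1_over_n] by simp
  qed simp
  then show "(\<lambda>n. grid_point n (grid_index n y) $ a) \<longlonglongrightarrow> y $ a"
    by (simp add: grid_point_def)
qed

lemma eventually_inj_grid_index:
  assumes "\<forall>a. 0 \<le> y $ a" "inj (($) y)"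
  shows "\<forall>\<^sub>F n in sequentially. inj (grid_index n y)"
proof -
  have "\<forall>\<^sub>F n in sequentially. grid_index n y a = grid_index n y b \<longrightarrow> a = b" for a b
  proof (cases "a = b")
    case False
    define d where "d = \<bar>y $ a - y $ b\<bar>"
    have d: "0 < d"
      using assms(2) False by (auto simp: d_def dest: injD)
    obtain k :: nat where k: "1 / d < real k"
      using reals_Archimedean2 by blast
    have "grid_index n y a \<noteq> grid_index n y b" if "n \<ge> k" for n
    proof
      assume eq: "grid_index n y a = grid_index n y b"
      have "1 < real k * d"
        using k d by (simp add: field_simps)
      also have "\<dots> \<le> real n * d"
        using that d by (intro mult_right_mono) auto
      finally have "1 < real n * d" .
      moreover have "\<bar>real n * y $ a - real n * y $ b\<bar> < 1"
        using grid_index_bounds[of y a n] grid_index_bounds[of y b n] assms(1) eq by auto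
      ultimately show False
        by (simp add: d_def abs_mult flip: right_diff_distrib)
    qed
    then show ?thesis
      unfolding eventually_sequentially by blast
  qed simp
  then have "\<forall>\<^sub>F n in sequentially. \<forall>a b. grid_index n y a = grid_index n y b \<longrightarrow> a = b"
    by (simp add: eventually_all_finite)
  then show ?thesis
    by (simp add: inj_def)
qed

lemma AE_lborel_not_in_negligible:
  assumes "negligible S"
  shows "AE x in lborel. x \<notin> S"
proof -
  have "AE x in lebesgue. x \<notin> S"
    using assms by (intro AE_not_in) (simp add: negligible_iff_null_sets)
  then show ?thesis
    by (simp add: AE_completion_iff)
qed

lemma AE_mem_box_of_mem_cbox: "AE y in lborel. y \<in> cbox a b \<longrightarrow> y \<in> box a b"
  using AE_lborel_not_in_negligible[OF negligible_frontier_interval[of a b]] by auto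

lemma negligible_eq_coordinates:
  assumes "a \<noteq> b"
  shows "negligible {y :: real^'l::finite. y $ a = y $ b}"
proof -
  have "axis a (1::real) - axis b 1 \<noteq> 0"
  proof
    assume "axis a (1::real) - axis b 1 = 0"
    then have "(axis a (1::real) - axis b 1) $ a = 0" by simp
    then show False using assms by (simp add: axis_def)
  qed
  moreover have "{y :: real^'l. y $ a = y $ b} = {y. (axis a 1 - axis b 1) \<bullet> y = 0}"
    by (auto simp: inner_diff_left inner_axis')
  ultimately show ?thesis
    using negligible_hyperplane[of "axis a 1 - axis b 1" 0] by simp
qed

lemma AE_inj_vec_nth: "AE y in lborel. inj (($) (y :: real^'l::finite))"
proof -
  have "negligible (\<Union>a. \<Union>b\<in>-{a}. {y :: real^'l. y $ a = y $ b})"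
    by (intro negligible_Union finite_imageI) (auto intro: negligible_eq_coordinates)
  then show ?thesis
    by (rule AE_mp[OF AE_lborel_not_in_negligible]) (auto simp: inj_def)
qed

lemma tendsto_integral_step_fun:
  fixes G :: "nat \<Rightarrow> ('l::finite \<Rightarrow> nat) \<Rightarrow> real" and g :: "real^'l \<Rightarrow> real"
  assumes bounded: "\<forall>\<^sub>F n in sequentially. \<forall>q\<in>grid_points n. \<bar>G n q\<bar> \<le> K"
    and pointwise: "AE y in lborel. y \<in> box 0 1 \<longrightarrow> (\<lambda>n. G n (grid_index n y)) \<longlonglongrightarrow> g y"
    and g_meas: "g \<in> borel_measurable lborel"
    and g_outside: "\<And>y. y \<notin> cbox 0 1 \<Longrightarrow> g y = 0"
  shows "(\<lambda>n. \<integral>y. step_fun n (G n) y \<partial>lborel) \<longlonglongrightarrow> (\<integral>y. g y \<partial>lborel)"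
proof -
  obtain N where N: "\<And>n. n \<ge> N \<Longrightarrow> 1 \<le> n \<and> (\<forall>q\<in>grid_points n. \<bar>G n q\<bar> \<le> K)"
    using eventually_conj[OF eventually_ge_at_top[of 1] bounded] by (auto simp: eventually_sequentially)
  have "(\<lambda>n. \<integral>y. step_fun (n + N) (G (n + N)) y \<partial>lborel) \<longlonglongrightarrow> (\<integral>y. g y \<partial>lborel)"
  proof (rule integral_dominated_convergence[where w = "\<lambda>y. K * indicator (cbox 0 1) y"])
    show "step_fun (n + N) (G (n + N)) \<in> borel_measurable lborel" for n
      by measurable
    show "integrable lborel (\<lambda>y::real^'l. K * indicator (cbox 0 1) y)"
      by (intro integrable_mult_right integrable_real_indicator emeasure_lborel_cbox_finite) simp
    show "AE y in lborel. norm (step_fun (n + N) (G (n + N)) y) \<le> K * indicator (cbox 0 1) y" for n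
      unfolding real_norm_def by (intro AE_I2, rule abs_step_fun_le) (use N[of "n + N"] in auto)
    show "AE y in lborel. (\<lambda>n. step_fun (n + N) (G (n + N)) y) \<longlonglongrightarrow> g y"
      using pointwise AE_mem_box_of_mem_cbox[of 0 1]
    proof eventually_elim
      case (elim y)
      show ?case
      proof (cases "y \<in> box 0 1")
        case True
        then have "(\<lambda>n. G (n + N) (grid_index (n + N) y)) \<longlonglongrightarrow> g y"
          using elim LIMSEQ_ignore_initial_segment by blast
        then show ?thesis
          using step_fun_in_box[OF _ True] N by simp
      next
        case False
        with elim have "y \<notin> cbox 0 1" by blast
        then show ?thesis
          by (simp add: g_outside step_fun_outside_cbox)
      qed
    qed
  qed (fact g_meas)
  then show ?thesis
    by (rule LIMSEQ_offset)
qed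

lemma tendsto_expectation_grid_point:
  fixes Q :: "nat \<Rightarrow> ('l::finite \<Rightarrow> nat) pmf" and D f :: "real^'l \<Rightarrow> real"
  assumes supp: "\<forall>\<^sub>F n in sequentially. set_pmf (Q n) \<subseteq> grid_points n"
    and bounded: "\<forall>\<^sub>F n in sequentially. \<forall>q\<in>set_pmf (Q n). real n ^ CARD('l) * pmf (Q n) q \<le> C"
    and local_limit: "AE y in lborel. y \<in> box 0 1 \<longrightarrow>
      (\<lambda>n. real n ^ CARD('l) * pmf (Q n) (grid_index n y)) \<longlonglongrightarrow> D y"
    and D_meas: "D \<in> borel_measurable lborel"
    and D_outside: "\<And>y. y \<notin> cbox 0 1 \<Longrightarrow> D y = 0"
    and f_cont: "continuous_on UNIV f" and f_bounded: "bounded (range f)"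
  shows "(\<lambda>n. measure_pmf.expectation (Q n) (\<lambda>q. f (grid_point n q)))
    \<longlonglongrightarrow> (\<integral>y. D y * f y \<partial>lborel)"
proof -
  obtain B where B: "\<And>y. \<bar>f y\<bar> \<le> B"
    using f_bounded by (auto simp: bounded_real)
  obtain n0 where "\<forall>q\<in>set_pmf (Q n0). real n0 ^ CARD('l) * pmf (Q n0) q \<le> C"
    using bounded by (auto simp: eventually_sequentially)
  moreover obtain q0 where "q0 \<in> set_pmf (Q n0)"
    using set_pmf_not_empty[of "Q n0"] by blast
  ultimately have "0 \<le> C"
    by (meson order_trans pmf_nonneg of_nat_0_le_iff zero_le_mult_iff zero_le_power)
  define G where "G n q = real n ^ CARD('l) * pmf (Q n) q * f (grid_point n q)" for n q
  have "(\<lambda>n. \<integral>y. step_fun n (G n) y \<partial>lborel) \<longlonglongrightarrow> (\<integral>y. D y * f y \<partial>lborel)"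
  proof (rule tendsto_integral_step_fun)
    show "\<forall>\<^sub>F n in sequentially. \<forall>q\<in>grid_points n. \<bar>G n q\<bar> \<le> C * B"
      using bounded
    proof eventually_elim
      case (elim n)
      have "\<bar>G n q\<bar> \<le> C * B" for q
        using elim B[of "grid_point n q"] \<open>0 \<le> C\<close> B[of 0]
        by (cases "q \<in> set_pmf (Q n)") (auto simp: G_def abs_mult set_pmf_iff intro: mult_mono')
      then show ?case ..
    qed
    show "AE y in lborel. y \<in> box 0 1 \<longrightarrow> (\<lambda>n. G n (grid_index n y)) \<longlonglongrightarrow> D y * f y"
      using local_limit
    proof eventually_elim
      case (elim y)
      show ?case
      proof
        assume y: "y \<in> box 0 1"
        have "(\<lambda>n. f (grid_point n (grid_index n y))) \<longlonglongrightarrow> f y"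
          using y by (intro continuous_on_tendsto_compose[OF f_cont tendsto_grid_point_grid_index])
            (auto simp: mem_box_cart less_imp_le)
        then show "(\<lambda>n. G n (grid_index n y)) \<longlonglongrightarrow> D y * f y"
          unfolding G_def using elim y by (intro tendsto_mult) auto
      qed
    qed
    show "(\<lambda>y. D y * f y) \<in> borel_measurable lborel"
      using D_meas borel_measurable_continuous_onI[OF f_cont] by measurable
  qed (simp add: D_outside)
  moreover have "\<forall>\<^sub>F n in sequentially. (\<integral>y. step_fun n (G n) y \<partial>lborel)
      = measure_pmf.expectation (Q n) (\<lambda>q. f (grid_point n q))"
    using supp eventually_ge_at_top[of 1]
    by eventually_elim (simp add: expectation_grid_point_eq_integral_step_fun G_def[abs_def])
  ultimately show ?thesis
    by (rule Lim_transform_eventually)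
qed

lemma class_C_bounds:
  assumes "class_C \<rho>"
  obtains M where "\<forall>u\<in>{0..1}. \<forall>v\<in>{0..1}. 0 < \<rho> u v \<and> \<rho> u v \<le> M"
proof -
  have "compact ((\<lambda>(u, v). \<rho> u v) ` ({0..1} \<times> {0..1}))"
    using assms by (intro compact_continuous_image compact_Times) (auto simp: class_C_def)
  then have "bounded ((\<lambda>(u, v). \<rho> u v) ` ({0..1} \<times> {0..1}))"
    by (rule compact_imp_bounded)
  then obtain M where M: "\<forall>z \<in> (\<lambda>(u, v). \<rho> u v) ` ({0..1} \<times> {0..1}). \<bar>z\<bar> \<le> M"
    unfolding bounded_real by blast
  have "\<rho> u v \<le> M" if "u \<in> {0..1}" "v \<in> {0..1}" for u v
  proof -
    have "\<rho> u v \<in> (\<lambda>(u, v). \<rho> u v) ` ({0..1} \<times> {0..1})"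
      using that by (intro image_eqI[where x = "(u, v)"]) auto
    then have "\<bar>\<rho> u v\<bar> \<le> M"
      using M by blast
    then show ?thesis
      by (simp add: abs_le_iff)
  qed
  then show ?thesis
    using assms by (intro that[of M]) (auto simp: class_C_def)
qed

lemma class_C_continuous_on_slice:
  assumes "class_C \<rho>" "u \<in> {0..1}"
  shows "continuous_on {0..1} (\<rho> u)"
proof -
  have "continuous_on ({0..1} \<times> {0..1}) (\<lambda>(u, v). \<rho> u v)"
    using assms(1) by (simp add: class_C_def)
  then have "continuous_on {0..1} (\<lambda>v. (\<lambda>(u, v). \<rho> u v) (u, v))"
    by (rule continuous_on_compose2) (use assms(2) in \<open>auto intro!: continuous_intros\<close>)
  then show ?thesis
    by simp
qed

definition limit_density :: "(real \<Rightarrow> real \<Rightarrow> real) \<Rightarrow> real^'l::finite \<Rightarrow> real^'l \<Rightarrow> real" where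
  "limit_density \<rho> x y = (\<Prod>a\<in>UNIV. indicator {0..1} (y $ a) * \<rho> (x $ a) (y $ a))"

lemma limit_density_outside_cbox:
  assumes "y \<notin> cbox 0 1"
  shows "limit_density \<rho> x y = 0"
proof -
  obtain a where "y $ a \<notin> {0..1}"
    using assms by (auto simp: mem_box_cart)
  then show ?thesis
    unfolding limit_density_def by (intro prod_zero bexI[of _ a]) auto
qed

lemma limit_density_in_cbox:
  assumes "y \<in> cbox 0 1"
  shows "limit_density \<rho> x y = (\<Prod>a\<in>UNIV. \<rho> (x $ a) (y $ a))"
  using assms unfolding limit_density_def by (intro prod.cong) (auto simp: mem_box_cart)

lemma borel_measurable_limit_density:
  fixes x :: "real^'l::finite"
  assumes "class_C \<rho>" "\<forall>a. x $ a \<in> {0..1}"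
  shows "limit_density \<rho> x \<in> borel_measurable lborel"
proof -
  have slice: "(\<lambda>t. indicator {0..1} t *\<^sub>R \<rho> (x $ a) t) \<in> borel_measurable borel" for a
    using assms by (intro borel_measurable_continuous_on_indicator class_C_continuous_on_slice) auto
  have "(\<lambda>y::real^'l. (\<lambda>t. indicator {0..1} t *\<^sub>R \<rho> (x $ a) t) (y $ a)) \<in> borel_measurable lborel" for a
    by (rule measurable_compose[OF _ slice]) simp
  then have "(\<lambda>y::real^'l. \<Prod>a\<in>UNIV. (\<lambda>t. indicator {0..1} t *\<^sub>R \<rho> (x $ a) t) (y $ a)) \<in> borel_measurable lborel"
    by (rule borel_measurable_prod)
  then show ?thesis
    by (simp add: limit_density_def[abs_def])
qed

lemma integral_limit_law:
  assumes "class_C \<rho>" "\<forall>a. x $ a \<in> {0..1}" "f \<in> borel_measurable lborel"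
  shows "integral\<^sup>L (limit_law \<rho> x) f = (\<integral>y. limit_density \<rho> x y * f y \<partial>lborel)"
proof -
  have "0 \<le> limit_density \<rho> x y" for y
    using assms(1,2) unfolding limit_density_def class_C_def
    by (intro prod_nonneg) (auto simp: indicator_def less_imp_le)
  then show ?thesis
    using integral_density[OF assms(3) borel_measurable_limit_density[OF assms(1,2)]]
    by (simp add: limit_law_def limit_density_def)
qed

lemma conv_in_distr_grid_point:
  fixes Q :: "nat \<Rightarrow> ('l::finite \<Rightarrow> nat) pmf"
  assumes "\<forall>\<^sub>F n in sequentially. set_pmf (Q n) \<subseteq> grid_points n"
    and "\<forall>\<^sub>F n in sequentially. \<forall>q\<in>set_pmf (Q n). real n ^ CARD('l) * pmf (Q n) q \<le> C"
    and "AE y in lborel. y \<in> box 0 1 \<longrightarrow>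
      (\<lambda>n. real n ^ CARD('l) * pmf (Q n) (grid_index n y)) \<longlonglongrightarrow> limit_density \<rho> x y"
    and "class_C \<rho>" "\<forall>a. x $ a \<in> {0..1}"
  shows "conv_in_distr (\<lambda>n. measure_pmf (map_pmf (grid_point n) (Q n))) (limit_law \<rho> x)"
  unfolding conv_in_distr_def
proof (intro allI impI)
  fix f :: "real^'l \<Rightarrow> real"
  assume f: "continuous_on UNIV f \<and> bounded (range f)"
  have "(\<lambda>n. measure_pmf.expectation (Q n) (\<lambda>q. f (grid_point n q)))
      \<longlonglongrightarrow> (\<integral>y. limit_density \<rho> x y * f y \<partial>lborel)"
    by (rule tendsto_expectation_grid_point[OF assms(1-3)
        borel_measurable_limit_density[OF assms(4,5)] limit_density_outside_cbox]) (use f in auto)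
  then show "(\<lambda>n. integral\<^sup>L (measure_pmf (map_pmf (grid_point n) (Q n))) f)
      \<longlonglongrightarrow> integral\<^sup>L (limit_law \<rho> x) f"
    using f assms(4,5) by (simp add: integral_limit_law borel_measurable_continuous_onI)
qed

definition tuple_density :: "(real \<Rightarrow> real \<Rightarrow> real) \<Rightarrow> nat \<Rightarrow> ('l::finite \<Rightarrow> nat) \<Rightarrow> ('l \<Rightarrow> nat) \<Rightarrow> real"
  where "tuple_density \<rho> n p q = (\<Prod>a\<in>UNIV. \<rho> (real (p a) / real n) (real (q a) / real n))"

lemma grid_coordinate_in_unit:
  assumes "q \<in> grid_points n"
  shows "real (q a) / real n \<in> {0..1}"
  using assms by (auto simp: grid_points_def divide_le_eq_1)

lemma tuple_density_bounds:
  assumes "\<forall>u\<in>{0..1}. \<forall>v\<in>{0..1}. 0 < \<rho> u v \<and> \<rho> u v \<le> M"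
    and "p \<in> grid_points n" "q \<in> grid_points n"
  shows "0 < tuple_density \<rho> n p q" "tuple_density \<rho> n (p :: 'l::finite \<Rightarrow> nat) q \<le> M ^ CARD('l)"
proof -
  have bounds: "0 < \<rho> (real (p a) / real n) (real (q a) / real n)
      \<and> \<rho> (real (p a) / real n) (real (q a) / real n) \<le> M" for a
    using assms grid_coordinate_in_unit by blast
  then show "0 < tuple_density \<rho> n p q"
    unfolding tuple_density_def by (intro prod_pos) auto
  have "tuple_density \<rho> n p q \<le> (\<Prod>a\<in>(UNIV :: 'l set). M)"
    unfolding tuple_density_def using bounds by (intro prod_mono) (auto intro: less_imp_le)
  then show "tuple_density \<rho> n p q \<le> M ^ CARD('l)"
    by simp
qed

lemma tendsto_tuple_density:
  assumes "continuous_on ({0..1} \<times> {0..1}) (\<lambda>(u, v). \<rho> u v)"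
    and "(\<lambda>n. grid_point n (p n)) \<longlonglongrightarrow> u" "(\<lambda>n. grid_point n (q n)) \<longlonglongrightarrow> v"
    and "\<forall>a. u $ a \<in> {0..1}" "\<forall>a. v $ a \<in> {0..1}"
    and "\<forall>\<^sub>F n in sequentially. p n \<in> grid_points n \<and> q n \<in> grid_points n"
  shows "(\<lambda>n. tuple_density \<rho> n (p n) (q n)) \<longlonglongrightarrow> (\<Prod>a\<in>UNIV. \<rho> (u $ a) (v $ a))"
  unfolding tuple_density_def
proof (rule tendsto_prod)
  fix a
  have "(\<lambda>n. (real (p n a) / real n, real (q n a) / real n)) \<longlonglongrightarrow> (u $ a, v $ a)"
    using tendsto_vec_nth[OF assms(2), of a] tendsto_vec_nth[OF assms(3), of a]
    by (intro tendsto_Pair) (simp_all add: grid_point_def)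
  moreover have "\<forall>\<^sub>F n in sequentially. (real (p n a) / real n, real (q n a) / real n) \<in> {0..1} \<times> {0..1}"
    using assms(6) by eventually_elim (blast intro: grid_coordinate_in_unit)
  ultimately have "(\<lambda>n. (\<lambda>(u, v). \<rho> u v) (real (p n a) / real n, real (q n a) / real n))
      \<longlonglongrightarrow> (\<lambda>(u, v). \<rho> u v) (u $ a, v $ a)"
    using assms(4,5) by (intro continuous_on_tendsto_compose[OF assms(1)]) auto
  then show "(\<lambda>n. \<rho> (real (p n a) / real n) (real (q n a) / real n)) \<longlonglongrightarrow> \<rho> (u $ a) (v $ a)"
    by simp
qed

lemma tendsto_tuple_density_grid_index:
  fixes p :: "nat \<Rightarrow> 'l::finite \<Rightarrow> nat"
  assumes "class_C \<rho>" "\<forall>a. x $ a \<in> {0..1}" "(\<lambda>n. grid_point n (p n)) \<longlonglongrightarrow> x"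
    and "\<forall>\<^sub>F n in sequentially. p n \<in> grid_points n" "y \<in> box 0 1"
  shows "(\<lambda>n. tuple_density \<rho> n (p n) (grid_index n y)) \<longlonglongrightarrow> limit_density \<rho> x y"
proof -
  have y: "\<forall>a. y $ a \<in> {0..1}"
    using assms(5) by (auto simp: mem_box_cart less_imp_le)
  have grid: "\<forall>\<^sub>F n in sequentially. p n \<in> grid_points n \<and> grid_index n y \<in> grid_points n"
    using assms(4) eventually_ge_at_top[of 1]
    by eventually_elim (use mem_grid_cell_grid_index(2)[OF _ assms(5)] in auto)
  have "(\<lambda>n. tuple_density \<rho> n (p n) (grid_index n y)) \<longlonglongrightarrow> (\<Prod>a\<in>UNIV. \<rho> (x $ a) (y $ a))"
    by (rule tendsto_tuple_density[OF _ assms(3) tendsto_grid_point_grid_index assms(2) y grid])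
      (use assms(1) y in \<open>auto simp: class_C_def\<close>)
  then show ?thesis
    using limit_density_in_cbox[OF subsetD[OF box_subset_cbox assms(5)]] by simp
qed

lemma abs_diff_le_of_abs_ratio_le:
  fixes r R K s :: real
  assumes "0 < R" "R \<le> K" "\<bar>r / R - 1\<bar> \<le> s"
  shows "\<bar>r - R\<bar> \<le> K * s"
proof -
  have "r - R = R * (r / R - 1)"
    using assms(1) by (simp add: field_simps)
  then have "\<bar>r - R\<bar> = R * \<bar>r / R - 1\<bar>"
    using assms(1) by (simp add: abs_mult)
  also have "\<dots> \<le> K * s"
    using assms by (intro mult_mono) auto
  finally show ?thesis .
qed

lemma eventually_le_of_uniformly_close:
  fixes d R :: "nat \<Rightarrow> 'a \<Rightarrow> real"
  assumes "\<forall>\<^sub>F n in sequentially. \<forall>q\<in>A n. \<bar>d n q - R n q\<bar> \<le> K * s n"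
    and "\<forall>\<^sub>F n in sequentially. \<forall>q\<in>A n. R n q \<le> K"
    and "0 \<le> K" "s \<longlonglongrightarrow> 0"
  shows "\<forall>\<^sub>F n in sequentially. \<forall>q\<in>A n. d n q \<le> 2 * K"
proof -
  have "\<forall>\<^sub>F n in sequentially. s n < 1"
    using assms(4) by (rule order_tendstoD) simp
  then show ?thesis
    using assms(1,2)
  proof eventually_elim
    case (elim n)
    have "K * s n \<le> K"
      using elim(1) assms(3) mult_left_mono[of "s n" 1 K] by simp
    then show ?case
      using elim(2,3) by fastforce
  qed
qed

lemma tendsto_of_uniformly_close:
  fixes d R :: "nat \<Rightarrow> 'a \<Rightarrow> real"
  assumes "\<forall>\<^sub>F n in sequentially. \<forall>q\<in>A n. \<bar>d n q - R n q\<bar> \<le> K * s n"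
    and "s \<longlonglongrightarrow> 0" "\<forall>\<^sub>F n in sequentially. c n \<in> A n" "(\<lambda>n. R n (c n)) \<longlonglongrightarrow> L"
  shows "(\<lambda>n. d n (c n)) \<longlonglongrightarrow> L"
proof -
  have "(\<lambda>n. d n (c n) - R n (c n)) \<longlonglongrightarrow> 0"
  proof (rule Lim_null_comparison)
    show "\<forall>\<^sub>F n in sequentially. norm (d n (c n) - R n (c n)) \<le> K * s n"
      using assms(1,3) by eventually_elim auto
    show "(\<lambda>n. K * s n) \<longlonglongrightarrow> 0"
      using tendsto_mult_right_zero[OF assms(2)] .
  qed
  from tendsto_add[OF this assms(4)] show ?thesis
    by simp
qed

lemma tuples_S_subset_grid_points: "tuples_S n \<subseteq> grid_points n"
  unfolding tuples_S_def grid_points_def by blast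

lemma finite_tuples_S: "finite (tuples_S n :: ('l::finite \<Rightarrow> nat) set)"
  using finite_subset[OF tuples_S_subset_grid_points finite_grid_points] .

lemma eventually_grid_index_in_tuples_S:
  assumes "y \<in> box 0 1" "inj (($) y)"
  shows "\<forall>\<^sub>F n in sequentially. grid_index n y \<in> tuples_S n"
proof -
  have "\<forall>a. 0 \<le> y $ a"
    using assms(1) by (auto simp: mem_box_cart less_imp_le)
  with assms(2) have "\<forall>\<^sub>F n in sequentially. inj (grid_index n y)"
    by (rule eventually_inj_grid_index[rotated])
  then show ?thesis
    using eventually_ge_at_top[of 1]
  proof eventually_elim
    case (elim n)
    then show ?case
      using mem_grid_cell_grid_index(2)[OF _ assms(1)] by (auto simp: tuples_S_def grid_points_def)
  qed
qed

lemma pmf_map_comp_tuple: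
  "pmf (map_pmf (\<lambda>\<pi>. \<pi> \<circ> p) P) q = measure_pmf.prob P {\<pi>. \<forall>a. \<pi> (p a) = q a}"
proof -
  have "(\<lambda>\<pi>. \<pi> \<circ> p) -` {q} = {\<pi>. \<forall>a. \<pi> (p a) = q a}"
    by (auto simp: fun_eq_iff)
  then show ?thesis
    by (simp add: pmf_map)
qed

lemma set_pmf_map_comp_tuple_subset:
  assumes "set_pmf P \<subseteq> {\<pi>. \<pi> permutes {1..n}}" "p \<in> tuples_S n"
  shows "set_pmf (map_pmf (\<lambda>\<pi>. \<pi> \<circ> p) P) \<subseteq> tuples_S n"
proof
  fix q assume "q \<in> set_pmf (map_pmf (\<lambda>\<pi>. \<pi> \<circ> p) P)"
  then obtain \<pi> where \<pi>: "\<pi> permutes {1..n}" and q: "q = \<pi> \<circ> p"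
    using assms(1) by auto
  have "range q \<subseteq> {1..n}"
    using assms(2) permutes_in_image[OF \<pi>] by (auto simp: q tuples_S_def)
  moreover have "inj q"
    using assms(2) permutes_inj[OF \<pi>] by (auto simp: q tuples_S_def intro: inj_compose)
  ultimately show "q \<in> tuples_S n"
    by (simp add: tuples_S_def)
qed

lemma tuple_pmf_close_to_tuple_density:
  fixes p q :: "'l::finite \<Rightarrow> nat"
  assumes "\<forall>u\<in>{0..1}. \<forall>v\<in>{0..1}. 0 < \<rho> u v \<and> \<rho> u v \<le> M"
    and "p \<in> tuples_S n" "q \<in> tuples_S n"
  shows "\<bar>real n ^ CARD('l) * pmf (map_pmf (\<lambda>\<pi>. \<pi> \<circ> p) Pn) q - tuple_density \<rho> n p q\<bar>
    \<le> M ^ CARD('l) * (SUP pq \<in> (tuples_S n :: ('l \<Rightarrow> nat) set) \<times> tuples_S n.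
        \<bar>real n ^ CARD('l) * measure_pmf.prob Pn {\<pi>. \<forall>a. \<pi> (fst pq a) = snd pq a}
          / (\<Prod>a\<in>UNIV. \<rho> (real (fst pq a) / real n) (real (snd pq a) / real n)) - 1\<bar>)"
proof (rule abs_diff_le_of_abs_ratio_le)
  show "0 < tuple_density \<rho> n p q" "tuple_density \<rho> n p q \<le> M ^ CARD('l)"
    using tuple_density_bounds[OF assms(1)] assms(2,3) tuples_S_subset_grid_points by blast+
  define T where "T pq = \<bar>real n ^ CARD('l) * measure_pmf.prob Pn {\<pi>. \<forall>a. \<pi> (fst pq a) = snd pq a}
    / (\<Prod>a\<in>UNIV. \<rho> (real (fst pq a) / real n) (real (snd pq a) / real n)) - 1\<bar>"
    for pq :: "('l \<Rightarrow> nat) \<times> ('l \<Rightarrow> nat)"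
  have "T (p, q) \<le> (SUP pq \<in> tuples_S n \<times> tuples_S n. T pq)"
    by (rule cSUP_upper) (use assms(2,3) in \<open>auto intro!: bdd_above_finite finite_imageI simp: finite_tuples_S\<close>)
  then show "\<bar>real n ^ CARD('l) * pmf (map_pmf (\<lambda>\<pi>. \<pi> \<circ> p) Pn) q / tuple_density \<rho> n p q - 1\<bar>
    \<le> (SUP pq \<in> (tuples_S n :: ('l \<Rightarrow> nat) set) \<times> tuples_S n.
        \<bar>real n ^ CARD('l) * measure_pmf.prob Pn {\<pi>. \<forall>a. \<pi> (fst pq a) = snd pq a}
          / (\<Prod>a\<in>UNIV. \<rho> (real (fst pq a) / real n) (real (snd pq a) / real n)) - 1\<bar>)"
    by (simp add: T_def[abs_def] tuple_density_def pmf_map_comp_tuple)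
qed

theorem corollary1p2:
  fixes \<rho> :: "real \<Rightarrow> real \<Rightarrow> real"
    and P :: "nat \<Rightarrow> (nat \<Rightarrow> nat) pmf"
    and pn :: "nat \<Rightarrow> ('l::finite \<Rightarrow> nat)"
    and x :: "real^'l"
  assumes rho: "class_C \<rho>"
    and perm: "\<And>n. n \<ge> 1 \<Longrightarrow> set_pmf (P n) \<subseteq> {\<pi>. \<pi> permutes {1..n}}"
    and unif: "(\<lambda>n. SUP pq \<in> (tuples_S n :: ('l \<Rightarrow> nat) set) \<times> tuples_S n.
                 \<bar>real n ^ CARD('l) * measure_pmf.prob (P n) {\<pi>. \<forall>a. \<pi> (fst pq a) = snd pq a}
                   / (\<Prod>a\<in>UNIV. \<rho> (real (fst pq a) / real n) (real (snd pq a) / real n)) - 1\<bar>)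
               \<longlonglongrightarrow> 0"
    and pn_S: "eventually (\<lambda>n. pn n \<in> tuples_S n) sequentially"
    and x_box: "\<forall>a. x $ a \<in> {0..1}"
    and pn_lim: "(\<lambda>n. \<chi> a. real (pn n a) / real n) \<longlonglongrightarrow> x"
  shows "conv_in_distr
           (\<lambda>n. measure_pmf (map_pmf (\<lambda>\<pi>. \<chi> a. real (\<pi> (pn n a)) / real n) (P n)))
           (limit_law \<rho> x)"
proof -
  let ?s = "\<lambda>n. SUP pq \<in> (tuples_S n :: ('l \<Rightarrow> nat) set) \<times> tuples_S n.
    \<bar>real n ^ CARD('l) * measure_pmf.prob (P n) {\<pi>. \<forall>a. \<pi> (fst pq a) = snd pq a}
      / (\<Prod>a\<in>UNIV. \<rho> (real (fst pq a) / real n) (real (snd pq a) / real n)) - 1\<bar>"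
  obtain M where M: "\<forall>u\<in>{0..1}. \<forall>v\<in>{0..1}. 0 < \<rho> u v \<and> \<rho> u v \<le> M"
    using class_C_bounds[OF rho] by blast
  have M_nonneg: "0 \<le> M ^ CARD('l)"
    using M[rule_format, of 0 0] by (intro zero_le_power) auto
  define Q where "Q n = map_pmf (\<lambda>\<pi>. \<pi> \<circ> pn n) (P n)" for n
  define d where "d n q = real n ^ CARD('l) * pmf (Q n) q" for n q
  define R where "R n = tuple_density \<rho> n (pn n)" for n
  have pn_grid_lim: "(\<lambda>n. grid_point n (pn n)) \<longlonglongrightarrow> x"
    using pn_lim by (simp add: grid_point_def)
  have pn_grid: "\<forall>\<^sub>F n in sequentially. pn n \<in> grid_points n"
    using pn_S by eventually_elim (use tuples_S_subset_grid_points in blast)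
  have supp: "\<forall>\<^sub>F n in sequentially. set_pmf (Q n) \<subseteq> tuples_S n"
    using pn_S eventually_ge_at_top[of 1]
  proof eventually_elim
    case (elim n)
    show ?case
      unfolding Q_def by (rule set_pmf_map_comp_tuple_subset[OF perm]) (use elim in auto)
  qed
  have close: "\<forall>\<^sub>F n in sequentially. \<forall>q\<in>tuples_S n. \<bar>d n q - R n q\<bar> \<le> M ^ CARD('l) * ?s n"
    using pn_S by eventually_elim (simp add: d_def R_def Q_def tuple_pmf_close_to_tuple_density[OF M])
  have R_le: "\<forall>\<^sub>F n in sequentially. \<forall>q\<in>tuples_S n. R n q \<le> M ^ CARD('l)"
    using pn_grid by eventually_elim
      (use tuples_S_subset_grid_points in \<open>auto simp: R_def intro: tuple_density_bounds(2)[OF M]\<close>)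
  have bounded: "\<forall>\<^sub>F n in sequentially. \<forall>q\<in>set_pmf (Q n). d n q \<le> 2 * M ^ CARD('l)"
    using eventually_le_of_uniformly_close[OF close R_le M_nonneg unif] supp by eventually_elim blast
  have local_limit: "AE y in lborel. y \<in> box 0 1 \<longrightarrow>
      (\<lambda>n. d n (grid_index n y)) \<longlonglongrightarrow> limit_density \<rho> x y"
    using AE_inj_vec_nth
  proof eventually_elim
    case (elim y)
    show ?case
    proof
      assume y: "y \<in> box 0 1"
      have "(\<lambda>n. R n (grid_index n y)) \<longlonglongrightarrow> limit_density \<rho> x y"
        unfolding R_def using tendsto_tuple_density_grid_index[OF rho x_box pn_grid_lim pn_grid y] .
      then show "(\<lambda>n. d n (grid_index n y)) \<longlonglongrightarrow> limit_density \<rho> x y"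
        by (rule tendsto_of_uniformly_close[OF close unif eventually_grid_index_in_tuples_S[OF y elim]])
    qed
  qed
  have "\<forall>\<^sub>F n in sequentially. set_pmf (Q n) \<subseteq> grid_points n"
    using supp by eventually_elim (use tuples_S_subset_grid_points in blast)
  then have "conv_in_distr (\<lambda>n. measure_pmf (map_pmf (grid_point n) (Q n))) (limit_law \<rho> x)"
    using bounded local_limit rho x_box unfolding d_def by (rule conv_in_distr_grid_point)
  moreover have "map_pmf (\<lambda>\<pi>. \<chi> a. real (\<pi> (pn n a)) / real n) (P n) = map_pmf (grid_point n) (Q n)" for n
    by (simp add: Q_def map_pmf_comp grid_point_def o_def)
  ultimately show ?thesis
    by simp
qed

end
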